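(* Let $\mathbb{A}$ be a medial algebra over a field of characteristic not $2,3$ and let $c$ be a nonzero idempotent of $\mathbb{A}$. Then the Peirce subspace $\mathbb{A}_c(0)=\ker L_c$ is an ideal of $\mathbb{A}$ and the quotient $\mathbb{A}'=\mathbb{A}/\mathbb{A}_c(0)$ is a medial algebra. If additionally $c$ is semi-simple, then $\mathbb{A}'_{c'}(0)=0$, where $c'$ is the class of $c$ in $\mathbb{A}'$.
   Context: All algebras commutative, possibly nonassociative, finite-dimensional. Medial: $(xy)(zw)=(xz)(yw)$ identically. $L_c:x\mapsto cx$, $\mathbb{A}_c(\lambda)=\ker(L_c-\lambda\mathbf{1})$. An idempotent $c$ is semi-simple if $\mathbb{A}$ is the direct sum of the eigenspaces $\mathbb{A}_c(\lambda)$ over the distinct eigenvalues $\lambda$ of $L_c$. *)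

theory Defs
  imports Complex_Main
begin

definition comm_algebra :: "('k::field \<Rightarrow> 'v::ab_group_add \<Rightarrow> 'v) \<Rightarrow> ('v \<Rightarrow> 'v \<Rightarrow> 'v) \<Rightarrow> bool" where
  "comm_algebra s m \<longleftrightarrow> vector_space s \<and> (\<forall>x y. m x y = m y x) \<and>
     (\<forall>x. Vector_Spaces.linear s s (m x))"

definition fin_dim :: "('k::field \<Rightarrow> 'v::ab_group_add \<Rightarrow> 'v) \<Rightarrow> bool" where
  "fin_dim s \<longleftrightarrow> (\<exists>B. finite B \<and> module.span s B = UNIV)"

definition medial :: "('v \<Rightarrow> 'v \<Rightarrow> 'v) \<Rightarrow> bool" where
  "medial m \<longleftrightarrow> (\<forall>x y z w. m (m x y) (m z w) = m (m x z) (m y w))"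

definition peirce :: "('k::field \<Rightarrow> 'v::ab_group_add \<Rightarrow> 'v) \<Rightarrow> ('v \<Rightarrow> 'v \<Rightarrow> 'v) \<Rightarrow> 'v \<Rightarrow> 'k \<Rightarrow> 'v set" where
  "peirce s m c t = {x. m c x = s t x}"

definition alg_ideal :: "('k::field \<Rightarrow> 'v::ab_group_add \<Rightarrow> 'v) \<Rightarrow> ('v \<Rightarrow> 'v \<Rightarrow> 'v) \<Rightarrow> 'v set \<Rightarrow> bool" where
  "alg_ideal s m I \<longleftrightarrow> module.subspace s I \<and> (\<forall>a x. x \<in> I \<longrightarrow> m a x \<in> I)"

text \<open>c is semi-simple: A is the direct sum of the eigenspaces A_c(lambda), i.e. every x
  decomposes uniquely as a finite sum of elements of the eigenspaces (eigenspaces of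
  non-eigenvalues are zero, so this is the direct sum over the distinct eigenvalues).\<close>
definition semi_simple :: "('k::field \<Rightarrow> 'v::ab_group_add \<Rightarrow> 'v) \<Rightarrow> ('v \<Rightarrow> 'v \<Rightarrow> 'v) \<Rightarrow> 'v \<Rightarrow> bool" where
  "semi_simple s m c \<longleftrightarrow> m c c = c \<and>
     (\<forall>x. \<exists>!f. (\<forall>t. f t \<in> peirce s m c t) \<and> finite {t. f t \<noteq> 0} \<and>
             x = sum f {t. f t \<noteq> 0})"

text \<open>pi : A \<rightarrow> B is a quotient map of algebras with kernel I (B = A/I up to isomorphism).\<close>
definition quotient_map ::
  "('k::field \<Rightarrow> 'v::ab_group_add \<Rightarrow> 'v) \<Rightarrow> ('v \<Rightarrow> 'v \<Rightarrow> 'v) \<Rightarrow>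
   ('k \<Rightarrow> 'w::ab_group_add \<Rightarrow> 'w) \<Rightarrow> ('w \<Rightarrow> 'w \<Rightarrow> 'w) \<Rightarrow> 'v set \<Rightarrow> ('v \<Rightarrow> 'w) \<Rightarrow> bool" where
  "quotient_map s m s' m' I \<pi> \<longleftrightarrow> Vector_Spaces.linear s s' \<pi> \<and> surj \<pi> \<and>
     (\<forall>x y. \<pi> (m x y) = m' (\<pi> x) (\<pi> y)) \<and> {x. \<pi> x = 0} = I"

end

theory Submission
  imports Defs
begin

text \<open>Mediality with \<open>c = c c\<close> gives \<open>c (a x) = (c c)(a x) = (c a)(c x)\<close>, so \<open>\<A>\<^sub>c(0) = ker L\<^sub>c\<close>
  is an ideal. Mediality is an identity, hence it passes to the homomorphic image \<open>\<A>/\<A>\<^sub>c(0)\<close>.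
  If \<open>c\<close> is semi-simple then \<open>L\<^sub>c\<close> is diagonalisable, so \<open>ker L\<^sub>c\<^sup>2 = ker L\<^sub>c\<close>; now
  \<open>c' y' = 0\<close> in the quotient means \<open>c y \<in> ker L\<^sub>c\<close>, i.e. \<open>y \<in> ker L\<^sub>c\<^sup>2 = ker L\<^sub>c\<close>, i.e. \<open>y' = 0\<close>.\<close>

lemma peirce_zero_eq_kernel:
  assumes "module s"
  shows "peirce s m c 0 = {x. m c x = 0}"
  unfolding peirce_def using module.scale_zero_left[OF assms] by simp

lemma alg_ideal_kernel_of_medial_idempotent:
  assumes lin: "\<And>a. module_hom s s (m a)" and med: "medial m" and idem: "m c c = c"
  shows "alg_ideal s m {x. m c x = 0}"
  unfolding alg_ideal_def
proof
  show "module.subspace s {x. m c x = 0}"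
    using module_hom.subspace_kernel[OF lin] .
  show "\<forall>a x. x \<in> {x. m c x = 0} \<longrightarrow> m a x \<in> {x. m c x = 0}"
  proof (intro allI impI)
    fix a x assume "x \<in> {x. m c x = 0}"
    then have "m c x = 0" by simp
    have "m c (m a x) = m (m c c) (m a x)" using idem by simp
    also have "\<dots> = m (m c a) (m c x)" using med unfolding medial_def by blast
    also have "\<dots> = 0" using \<open>m c x = 0\<close> module_hom.zero[OF lin] by simp
    finally show "m a x \<in> {x. m c x = 0}" by simp
  qed
qed

lemma medial_surj_hom_image:
  assumes med: "medial m" and surj: "surj \<pi>" and hom: "\<And>x y. \<pi> (m x y) = m' (\<pi> x) (\<pi> y)"
  shows "medial m'"
  unfolding medial_def
proof (intro allI)
  fix x y z w
  obtain a b d e where "x = \<pi> a" "y = \<pi> b" "z = \<pi> d" "w = \<pi> e"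
    using surj by (metis surj_def)
  moreover have "\<pi> (m (m a b) (m d e)) = \<pi> (m (m a d) (m b e))"
    using med unfolding medial_def by metis
  ultimately show "m' (m' x y) (m' z w) = m' (m' x z) (m' y w)" by (simp add: hom)
qed

lemma semi_simple_eigen_sum_eq_zero:
  assumes ss: "semi_simple s m c" and md: "module s" and lin: "module_hom s s (m c)"
    and eigen: "\<And>t. g t \<in> peirce s m c t" and fin: "finite {t. g t \<noteq> 0}"
    and sum0: "sum g {t. g t \<noteq> 0} = 0"
  shows "g t = 0"
proof -
  have "\<And>t. (\<lambda>_. 0) t \<in> peirce s m c t"
    unfolding peirce_def using module_hom.zero[OF lin] module.scale_zero_right[OF md] by simp
  moreover have "\<exists>!f. (\<forall>t. f t \<in> peirce s m c t) \<and> finite {t. f t \<noteq> 0} \<and> 0 = sum f {t. f t \<noteq> 0}"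
    using ss unfolding semi_simple_def by blast
  ultimately have "g = (\<lambda>_. 0)" using eigen fin sum0 by fastforce
  then show ?thesis by simp
qed

lemma semi_simple_kernel_square_eq_kernel:
  assumes ss: "semi_simple s m c" and vs: "vector_space s" and lin: "module_hom s s (m c)"
    and sq: "m c (m c y) = 0"
  shows "m c y = 0"
proof -
  have md: "module s" using vs by (simp add: vector_space_def module_def)
  obtain f where f: "\<And>t. f t \<in> peirce s m c t" "finite {t. f t \<noteq> 0}"
    "y = sum f {t. f t \<noteq> 0}"
    using ss unfolding semi_simple_def by blast
  define S where "S = {t. f t \<noteq> 0}"
  have eig: "m c (f t) = s t (f t)" for t using f(1) unfolding peirce_def by blast
  define g where "g t = s (t * t) (f t)" for t
  have g_eigen: "g t \<in> peirce s m c t" for t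
    unfolding peirce_def g_def
    by (simp add: eig module_hom.scale[OF lin] module.scale_scale[OF md] mult_ac)
  have g_supp: "{t. g t \<noteq> 0} \<subseteq> S"
    unfolding g_def S_def using module.scale_zero_right[OF md] by auto
  have "m c (m c y) = (\<Sum>t\<in>S. g t)"
    unfolding f(3) S_def[symmetric] g_def
    by (simp add: module_hom.sum[OF lin] eig module_hom.scale[OF lin] module.scale_scale[OF md])
  also have "\<dots> = (\<Sum>t\<in>{t. g t \<noteq> 0}. g t)"
    by (rule sum.mono_neutral_right) (use f(2) g_supp in \<open>auto simp: S_def\<close>)
  finally have "sum g {t. g t \<noteq> 0} = 0" using sq by simp
  then have g0: "s (t * t) (f t) = 0" for t
    using semi_simple_eigen_sum_eq_zero[OF ss md lin g_eigen] g_supp f(2)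
    unfolding g_def S_def by (metis finite_subset)
  have "s t (f t) = 0" for t
  proof (cases "t = 0")
    case True
    then show ?thesis using module.scale_zero_left[OF md] by simp
  next
    case False
    then have "s t (f t) = s (inverse t) (s (t * t) (f t))"
      by (simp add: module.scale_scale[OF md] field_simps)
    then show ?thesis using g0 module.scale_zero_right[OF md] by simp
  qed
  then show "m c y = 0"
    unfolding f(3) by (simp add: module_hom.sum[OF lin] eig)
qed

lemma quotient_by_kernel_peirce_zero_trivial:
  fixes \<pi> :: "'v::ab_group_add \<Rightarrow> 'w::ab_group_add"
  assumes q: "quotient_map s m s' m' {x. m c x = 0} \<pi>"
    and lin': "module_hom s' s' (m' (\<pi> c))"
    and ker_sq: "\<And>y. m c (m c y) = 0 \<Longrightarrow> m c y = 0"
  shows "{x. m' (\<pi> c) x = 0} = {0}"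
proof (intro set_eqI iffI)
  have surj: "surj \<pi>" and hom: "\<And>x y. \<pi> (m x y) = m' (\<pi> x) (\<pi> y)"
    and ker: "\<And>x. \<pi> x = 0 \<longleftrightarrow> m c x = 0"
    using q unfolding quotient_map_def by (auto simp: set_eq_iff)
  fix x assume "x \<in> {x. m' (\<pi> c) x = 0}"
  moreover obtain y where y: "x = \<pi> y" using surj by (metis surj_def)
  ultimately have "\<pi> (m c y) = 0" using hom by simp
  then have "m c y = 0" using ker ker_sq by blast
  then show "x \<in> {0}" using y ker by simp
next
  fix x :: 'w assume "x \<in> {0}"
  then show "x \<in> {x. m' (\<pi> c) x = 0}" using module_hom.zero[OF lin'] by simp
qed

theorem proposition4p1:
  fixes s :: "'k::field \<Rightarrow> 'v::ab_group_add \<Rightarrow> 'v" and m :: "'v \<Rightarrow> 'v \<Rightarrow> 'v"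
    and s' :: "'k \<Rightarrow> 'w::ab_group_add \<Rightarrow> 'w" and m' :: "'w \<Rightarrow> 'w \<Rightarrow> 'w"
    and c :: 'v and \<pi> :: "'v \<Rightarrow> 'w"
  assumes char: "(2::'k) \<noteq> 0" "(3::'k) \<noteq> 0"
    and alg: "comm_algebra s m" and fd: "fin_dim s" and med: "medial m"
    and idem: "m c c = c" and nz: "c \<noteq> 0"
    and algB: "comm_algebra s' m'"
  shows "alg_ideal s m (peirce s m c 0)
         \<and> (quotient_map s m s' m' (peirce s m c 0) \<pi> \<longrightarrow>
              medial m'
              \<and> (semi_simple s m c \<longrightarrow> peirce s' m' (\<pi> c) 0 = {0}))"
proof -
  have vs: "vector_space s" and lin: "\<And>a. module_hom s s (m a)"
    using alg unfolding comm_algebra_def by (auto simp: linear_iff_module_hom)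
  have vs': "vector_space s'" and lin': "\<And>a. module_hom s' s' (m' a)"
    using algB unfolding comm_algebra_def by (auto simp: linear_iff_module_hom)
  have ker: "peirce s m c 0 = {x. m c x = 0}"
    and ker': "peirce s' m' (\<pi> c) 0 = {x. m' (\<pi> c) x = 0}"
    using vs vs' by (simp_all add: peirce_zero_eq_kernel vector_space_def module_def)
  have "medial m' \<and> (semi_simple s m c \<longrightarrow> {x. m' (\<pi> c) x = 0} = {0})"
    if q: "quotient_map s m s' m' {x. m c x = 0} \<pi>"
  proof
    show "medial m'"
      using medial_surj_hom_image[OF med] q unfolding quotient_map_def by blast
    show "semi_simple s m c \<longrightarrow> {x. m' (\<pi> c) x = 0} = {0}"
      using quotient_by_kernel_peirce_zero_trivial[OF q lin']
        semi_simple_kernel_square_eq_kernel[of s m c, OF _ vs lin] by blast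
  qed
  then show ?thesis
    unfolding ker ker' using alg_ideal_kernel_of_medial_idempotent[OF lin med idem] by blast
qed

end
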